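(* Let $G$ be a finite group, $K$ an idempotent semifield, and $V$ an indecomposable representation of $G$ over $K$. Let $H\subseteq G$ be the stabilizer of some basis line of $V$ (so $H$ lies in the conjugacy class of subgroups corresponding to $V$), and pick a section $s:G/H\to G$ of the quotient map onto the set $G/H$ of left cosets. Then there is some $v\in V$ such that every element of $V$ can be written uniquely as $\sum_{g\in s(G/H)}a_g\,gv$ with $a_g\in K$. Moreover, every element of $V$ can be written uniquely as $\sum_{g\in G}a_g\,gv$ with $a_g\in K$ constant on left cosets, i.e. $a_{gh}=a_g$ for all $g\in G$, $h\in H$.
   Context: All semirings are commutative. A semifield is a semiring whose nonzero elements form a multiplicative group; idempotent means $a+a=a$ for all $a$. A representation of $G$ over $K$ is a $K$-linear action of $G$ on a free module $K^n$; it is indecomposable if it is not a direct sum of two nontrivial $G$-stable submodules. A basis line is a submodule spanned by a single vector of some basis; $G$ acts on basis lines by $g\cdot\mathrm{span}(v)=\mathrm{span}(gv)$. *)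

theory Defs
  imports "HOL-Algebra.Coset"
begin

class idem_semifield = comm_semiring_1 +
  assumes add_idem: "a + a = a"
  assumes nonzero_invertible: "a \<noteq> 0 \<Longrightarrow> \<exists>b. a * b = 1"

definition vadd :: "('n \<Rightarrow> 'k::comm_semiring_1) \<Rightarrow> ('n \<Rightarrow> 'k) \<Rightarrow> ('n \<Rightarrow> 'k)" where
  "vadd x y = (\<lambda>i. x i + y i)"

definition vscale :: "'k::comm_semiring_1 \<Rightarrow> ('n \<Rightarrow> 'k) \<Rightarrow> ('n \<Rightarrow> 'k)" where
  "vscale c x = (\<lambda>i. c * x i)"

definition lincomb :: "('a \<Rightarrow> 'k::comm_semiring_1) \<Rightarrow> ('a \<Rightarrow> 'n \<Rightarrow> 'k) \<Rightarrow> 'a set \<Rightarrow> ('n \<Rightarrow> 'k)" where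
  "lincomb c f B = (\<lambda>i. \<Sum>b\<in>B. c b * f b i)"

definition is_basis :: "('n::finite \<Rightarrow> 'k::comm_semiring_1) set \<Rightarrow> bool" where
  "is_basis B \<longleftrightarrow> finite B \<and>
     (\<forall>x. \<exists>!c. (\<forall>b. b \<notin> B \<longrightarrow> c b = 0) \<and> x = lincomb c (\<lambda>b. b) B)"

definition kspan :: "('n \<Rightarrow> 'k::comm_semiring_1) \<Rightarrow> ('n \<Rightarrow> 'k) set" where
  "kspan v = {vscale c v | c. True}"

definition is_rep :: "('g, 'm) monoid_scheme \<Rightarrow> ('g \<Rightarrow> ('n::finite \<Rightarrow> 'k::comm_semiring_1) \<Rightarrow> ('n \<Rightarrow> 'k)) \<Rightarrow> bool" where
  "is_rep G \<rho> \<longleftrightarrow>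
     (\<forall>g\<in>carrier G. \<forall>x y. \<rho> g (vadd x y) = vadd (\<rho> g x) (\<rho> g y)) \<and>
     (\<forall>g\<in>carrier G. \<forall>c x. \<rho> g (vscale c x) = vscale c (\<rho> g x)) \<and>
     (\<forall>x. \<rho> \<one>\<^bsub>G\<^esub> x = x) \<and>
     (\<forall>g\<in>carrier G. \<forall>h\<in>carrier G. \<forall>x. \<rho> (g \<otimes>\<^bsub>G\<^esub> h) x = \<rho> g (\<rho> h x))"

definition is_submodule :: "('n::finite \<Rightarrow> 'k::comm_semiring_1) set \<Rightarrow> bool" where
  "is_submodule W \<longleftrightarrow> (\<lambda>_. 0) \<in> W \<and> (\<forall>x\<in>W. \<forall>y\<in>W. vadd x y \<in> W) \<and>
     (\<forall>c. \<forall>x\<in>W. vscale c x \<in> W)"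

definition G_stable :: "('g, 'm) monoid_scheme \<Rightarrow> ('g \<Rightarrow> ('n \<Rightarrow> 'k) \<Rightarrow> ('n \<Rightarrow> 'k)) \<Rightarrow> ('n \<Rightarrow> 'k) set \<Rightarrow> bool" where
  "G_stable G \<rho> W \<longleftrightarrow> (\<forall>g\<in>carrier G. \<forall>x\<in>W. \<rho> g x \<in> W)"

definition is_direct_sum :: "('n::finite \<Rightarrow> 'k::comm_semiring_1) set \<Rightarrow> ('n \<Rightarrow> 'k) set \<Rightarrow> bool" where
  "is_direct_sum W1 W2 \<longleftrightarrow> (\<forall>x. \<exists>!p. fst p \<in> W1 \<and> snd p \<in> W2 \<and> x = vadd (fst p) (snd p))"

definition indecomposable :: "('g, 'm) monoid_scheme \<Rightarrow> ('g \<Rightarrow> ('n::finite \<Rightarrow> 'k::comm_semiring_1) \<Rightarrow> ('n \<Rightarrow> 'k)) \<Rightarrow> bool" where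
  "indecomposable G \<rho> \<longleftrightarrow>
     \<not> (\<exists>W1 W2. is_submodule W1 \<and> is_submodule W2 \<and> G_stable G \<rho> W1 \<and> G_stable G \<rho> W2 \<and>
          W1 \<noteq> {\<lambda>_. 0} \<and> W2 \<noteq> {\<lambda>_. 0} \<and> is_direct_sum W1 W2)"

definition lcosets :: "('g, 'm) monoid_scheme \<Rightarrow> 'g set \<Rightarrow> 'g set set" where
  "lcosets G H = (\<lambda>a. a <#\<^bsub>G\<^esub> H) ` carrier G"

end

(*
  In an idempotent semifield a sum vanishes only if every summand does, and there are no zero
  divisors. Hence an invertible linear map of K^n sends each unit vector e_j to a nonzero multiple
  of a unit vector, and every vector of a basis is a nonzero multiple of some e_i. So for v0 in the
  basis, g v0 = mu g * e_(pi g) for all g in G. The coordinates pi(G) span a G-stable coordinate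
  subspace whose complementary coordinate subspace is G-stable as well, so indecomposability forces
  pi to be onto. The stabiliser H of the line through v0 is {h. pi h = pi 1}, and the left cosets
  of H are the fibres of pi. The i-th coordinate of sum_g a_g (g v0) is the sum of a_g * mu g over
  the fibre of i, and both unique expansions can be read off from this.
*)

theory Submission
  imports Defs
begin

context idem_semifield
begin

subclass semiring_no_zero_divisors
proof
  fix a b assume "a \<noteq> 0" "b \<noteq> 0"
  obtain a' where a': "a' * a = 1" using nonzero_invertible[OF \<open>a \<noteq> 0\<close>] by (auto simp: mult.commute)
  show "a * b \<noteq> 0"
  proof
    assume "a * b = 0"
    have "b = (a' * a) * b" by (simp add: a')
    also have "\<dots> = 0" by (simp add: mult.assoc \<open>a * b = 0\<close>)
    finally show False using \<open>b \<noteq> 0\<close> by simp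
  qed
qed

lemma idem_add_eq_0_iff: "a + b = 0 \<longleftrightarrow> a = 0 \<and> b = 0"
proof
  assume sum0: "a + b = 0"
  have "a = a + (a + b)" by (simp add: sum0)
  also have "\<dots> = a + b" by (simp add: add.assoc[symmetric] add_idem)
  finally have "a = 0" by (simp add: sum0)
  with sum0 show "a = 0 \<and> b = 0" by simp
qed simp

lemma idem_sum_eq_0_iff: "finite S \<Longrightarrow> sum f S = 0 \<longleftrightarrow> (\<forall>x\<in>S. f x = 0)"
  by (induction S rule: finite_induct) (simp_all add: idem_add_eq_0_iff)

text \<open>\<open>recip 0\<close> is an unspecified value.\<close>

definition recip :: "'a \<Rightarrow> 'a" where
  "recip a = (SOME b. b * a = 1)"

lemma recip_mult: "a \<noteq> 0 \<Longrightarrow> recip a * a = 1"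
  unfolding recip_def by (rule someI_ex) (metis nonzero_invertible mult.commute)

lemma mult_recip: "a \<noteq> 0 \<Longrightarrow> a * recip a = 1"
  using recip_mult by (simp add: mult.commute)

lemma recip_nonzero: "a \<noteq> 0 \<Longrightarrow> recip a \<noteq> 0"
  using recip_mult[of a] by (metis mult_zero_left zero_neq_one)

end

definition unit_vec :: "'n \<Rightarrow> 'n \<Rightarrow> 'k::comm_semiring_1" where
  "unit_vec j = (\<lambda>i. if i = j then 1 else 0)"

lemma unit_vec_nonzero: "unit_vec j \<noteq> (\<lambda>_. 0)"
  by (metis unit_vec_def zero_neq_one)

lemma vscale_vscale: "vscale a (vscale b x) = vscale (a * b) x"
  by (simp add: vscale_def mult.assoc)

lemma kspan_vscale:
  assumes "c \<noteq> (0::'k::idem_semifield)"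
  shows "kspan (vscale c w) = kspan w"
proof -
  have "vscale d w = vscale (d * recip c) (vscale c w)" for d
    using recip_mult[OF assms] by (simp add: vscale_vscale mult.assoc)
  then show ?thesis unfolding kspan_def by (auto simp: vscale_vscale)
qed

lemma kspan_unit_vec_eq_iff:
  "kspan (unit_vec k :: 'n \<Rightarrow> 'k::comm_semiring_1) = kspan (unit_vec l) \<longleftrightarrow> k = l"
proof
  assume "kspan (unit_vec k :: 'n \<Rightarrow> 'k) = kspan (unit_vec l)"
  moreover have "vscale 1 (unit_vec k) \<in> kspan (unit_vec k :: 'n \<Rightarrow> 'k)"
    unfolding kspan_def by blast
  ultimately obtain c :: 'k where "vscale 1 (unit_vec k) = vscale c (unit_vec l)"
    unfolding kspan_def by auto
  then have "vscale 1 (unit_vec k) k = vscale c (unit_vec l) k" by simp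
  then show "k = l" by (simp add: vscale_def unit_vec_def split: if_splits)
qed simp

definition is_linear_map :: "(('n \<Rightarrow> 'k::comm_semiring_1) \<Rightarrow> ('n \<Rightarrow> 'k)) \<Rightarrow> bool" where
  "is_linear_map f \<longleftrightarrow>
     (\<forall>x y. f (vadd x y) = vadd (f x) (f y)) \<and> (\<forall>c x. f (vscale c x) = vscale c (f x))"

lemma lincomb_empty: "lincomb c g {} = (\<lambda>_. 0)"
  by (simp add: lincomb_def)

lemma lincomb_insert:
  "finite S \<Longrightarrow> b \<notin> S \<Longrightarrow> lincomb c g (insert b S) = vadd (vscale (c b) (g b)) (lincomb c g S)"
  by (simp add: lincomb_def vadd_def vscale_def)

lemma linear_map_zero:
  assumes "is_linear_map f"
  shows "f (\<lambda>_. 0) = (\<lambda>_. 0)"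
proof -
  have "f (vscale 0 (\<lambda>_. 0)) = vscale 0 (f (\<lambda>_. 0))"
    using assms by (simp add: is_linear_map_def)
  then show ?thesis by (simp add: vscale_def)
qed

lemma linear_map_lincomb:
  assumes "is_linear_map f" and "finite S"
  shows "f (lincomb c g S) = lincomb c (\<lambda>b. f (g b)) S"
  using assms(2)
  by (induction S rule: finite_induct)
     (use assms(1) in
        \<open>simp_all add: lincomb_empty lincomb_insert linear_map_zero is_linear_map_def\<close>)

lemma lincomb_unit_vec: "lincomb x unit_vec (UNIV :: 'n::finite set) = x"
  by (simp add: lincomb_def unit_vec_def if_distrib[of "(*) _"] cong: if_cong)

lemma linear_map_apply:
  fixes f :: "('n::finite \<Rightarrow> 'k::comm_semiring_1) \<Rightarrow> ('n \<Rightarrow> 'k)"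
  assumes "is_linear_map f"
  shows "f x i = (\<Sum>j\<in>UNIV. x j * f (unit_vec j) i)"
proof -
  have "f x = f (lincomb x unit_vec UNIV)" by (simp add: lincomb_unit_vec)
  also have "\<dots> = lincomb x (\<lambda>j. f (unit_vec j)) UNIV" by (rule linear_map_lincomb[OF assms]) simp
  finally show ?thesis by (simp add: lincomb_def)
qed

text \<open>If \<open>f e\<^sub>j\<close> has a nonzero \<open>k\<close>-th coordinate, then \<open>e\<^sub>j = g (f e\<^sub>j)\<close> and zero-sum-freeness
  force \<open>g e\<^sub>k\<close> to be a multiple of \<open>e\<^sub>j\<close>; applying \<open>f\<close> shows that \<open>f e\<^sub>j\<close> is a multiple of \<open>e\<^sub>k\<close>.\<close>

lemma invertible_linear_map_unit_vec:
  fixes f g :: "('n::finite \<Rightarrow> 'k::idem_semifield) \<Rightarrow> ('n \<Rightarrow> 'k)"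
  assumes f: "is_linear_map f" and g: "is_linear_map g"
    and gf: "\<And>x. g (f x) = x" and fg: "\<And>x. f (g x) = x"
  shows "\<exists>c k. c \<noteq> 0 \<and> f (unit_vec j) = vscale c (unit_vec k)"
proof -
  have "f (unit_vec j) \<noteq> (\<lambda>_. 0)"
    using gf[of "unit_vec j"] linear_map_zero[OF g] unit_vec_nonzero by metis
  then obtain k where k: "f (unit_vec j) k \<noteq> 0" by auto
  define b where "b = g (unit_vec k) j"
  have g_unit_vec: "g (unit_vec k) = vscale b (unit_vec j)"
  proof
    fix m
    show "g (unit_vec k) m = vscale b (unit_vec j) m"
    proof (cases "m = j")
      case False
      have "(\<Sum>l\<in>UNIV. f (unit_vec j) l * g (unit_vec l) m) = unit_vec j m"
        using gf linear_map_apply[OF g, of "f (unit_vec j)"] by simp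
      then have "f (unit_vec j) k * g (unit_vec k) m = 0"
        using False by (simp add: idem_sum_eq_0_iff unit_vec_def)
      with k False show ?thesis by (simp add: vscale_def unit_vec_def)
    qed (simp add: b_def vscale_def unit_vec_def)
  qed
  have unit_vec_k: "unit_vec k = vscale b (f (unit_vec j))"
    using fg[of "unit_vec k"] f g_unit_vec by (simp add: is_linear_map_def)
  then have "b \<noteq> 0"
    using unit_vec_nonzero by (fastforce simp: vscale_def)
  then have "f (unit_vec j) = vscale (recip b) (unit_vec k)"
    unfolding unit_vec_k vscale_vscale recip_mult[OF \<open>b \<noteq> 0\<close>] by (simp add: vscale_def)
  with \<open>b \<noteq> 0\<close> show ?thesis using recip_nonzero by blast
qed

lemma basis_coeff_self:
  fixes B :: "('n::finite \<Rightarrow> 'k::comm_semiring_1) set"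
  assumes "is_basis B" and "b0 \<in> B"
    and "\<forall>b. b \<notin> B \<longrightarrow> c b = 0" and "b0 = lincomb c (\<lambda>b. b) B"
  shows "c b0 = 1"
proof -
  define \<delta> where "\<delta> b = (if b = b0 then 1 else 0 :: 'k)" for b
  have "finite B" using assms(1) by (simp add: is_basis_def)
  then have "b0 = lincomb \<delta> (\<lambda>b. b) B"
    using assms(2) by (simp add: lincomb_def \<delta>_def if_distrib[of "\<lambda>a. a * _"] cong: if_cong)
  moreover have "\<forall>b. b \<notin> B \<longrightarrow> \<delta> b = 0" using assms(2) by (simp add: \<delta>_def)
  ultimately have "c = \<delta>" using assms unfolding is_basis_def by blast
  then show ?thesis by (simp add: \<delta>_def)
qed

text \<open>Write \<open>e\<^sub>i = (\<Sum>b\<in>B. C i b * b)\<close>. Substituting into \<open>v = (\<Sum>i. v i * e\<^sub>i)\<close> and comparing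
  with the trivial expansion of \<open>v \<in> B\<close> gives \<open>(\<Sum>i. v i * C i v) = 1\<close>. For \<open>i\<close> with
  \<open>v i * C i v \<noteq> 0\<close>, coordinate \<open>m \<noteq> i\<close> of the expansion of \<open>e\<^sub>i\<close> is a zero sum containing
  \<open>C i v * v m\<close>, so \<open>v m = 0\<close>.\<close>

lemma basis_vec_eq_vscale_unit_vec:
  fixes B :: "('n::finite \<Rightarrow> 'k::idem_semifield) set"
  assumes "is_basis B" and "v \<in> B"
  shows "\<exists>c i. c \<noteq> 0 \<and> v = vscale c (unit_vec i)"
proof -
  have "\<forall>i. \<exists>c. (\<forall>b. b \<notin> B \<longrightarrow> c b = 0) \<and> unit_vec i = lincomb c (\<lambda>b. b) B"
    using assms(1) unfolding is_basis_def by metis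
  then obtain C where C_supp: "\<And>i b. b \<notin> B \<Longrightarrow> C i b = 0"
    and C: "\<And>i m. unit_vec i m = (\<Sum>b\<in>B. C i b * b m)"
    unfolding lincomb_def by metis
  define d where "d b = (\<Sum>i\<in>UNIV. v i * C i b)" for b
  have "v = lincomb d (\<lambda>b. b) B"
  proof
    fix m
    have "v m = (\<Sum>i\<in>UNIV. v i * unit_vec i m)"
      by (metis lincomb_unit_vec lincomb_def)
    also have "\<dots> = lincomb d (\<lambda>b. b) B m"
      by (simp add: C lincomb_def d_def sum_distrib_left sum_distrib_right mult.assoc
          sum.swap[of _ B])
    finally show "v m = lincomb d (\<lambda>b. b) B m" .
  qed
  moreover have "\<forall>b. b \<notin> B \<longrightarrow> d b = 0" by (simp add: d_def C_supp)
  ultimately have "d v = 1" using basis_coeff_self assms by blast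
  then obtain i where i: "v i * C i v \<noteq> 0"
    unfolding d_def by (metis (mono_tags) sum.neutral zero_neq_one)
  have "v m = 0" if "m \<noteq> i" for m
  proof -
    have "(\<Sum>b\<in>B. C i b * b m) = 0" using C[of i m] that by (simp add: unit_vec_def)
    then have "C i v * v m = 0"
      using assms by (simp add: idem_sum_eq_0_iff is_basis_def)
    with i show ?thesis by simp
  qed
  then have "v = vscale (v i) (unit_vec i)" by (auto simp: vscale_def unit_vec_def)
  with i show ?thesis by auto
qed

definition coord_subspace :: "'n set \<Rightarrow> ('n \<Rightarrow> 'k::comm_semiring_1) set" where
  "coord_subspace J = {x. \<forall>i. i \<notin> J \<longrightarrow> x i = 0}"

lemma unit_vec_in_coord_subspace_iff: "unit_vec i \<in> coord_subspace J \<longleftrightarrow> i \<in> J"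
  by (auto simp: coord_subspace_def unit_vec_def)

lemma is_submodule_coord_subspace: "is_submodule (coord_subspace J)"
  by (simp add: is_submodule_def coord_subspace_def vadd_def vscale_def)

lemma vscale_in_coord_subspace: "x \<in> coord_subspace J \<Longrightarrow> vscale c x \<in> coord_subspace J"
  by (simp add: coord_subspace_def vscale_def)

lemma coord_subspace_nontrivial:
  assumes "i \<in> J"
  shows "(coord_subspace J :: ('n \<Rightarrow> 'k::comm_semiring_1) set) \<noteq> {\<lambda>_. 0}"
proof
  assume "(coord_subspace J :: ('n \<Rightarrow> 'k) set) = {\<lambda>_. 0}"
  moreover have "(unit_vec i :: 'n \<Rightarrow> 'k) \<in> coord_subspace J"
    using assms by (simp add: unit_vec_in_coord_subspace_iff)
  ultimately have "unit_vec i i = (0::'k)" by auto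
  then show False by (simp add: unit_vec_def)
qed

lemma is_direct_sum_coord_subspace_Compl:
  "is_direct_sum (coord_subspace J)
     (coord_subspace (- J) :: ('n::finite \<Rightarrow> 'k::comm_semiring_1) set)"
  unfolding is_direct_sum_def
proof
  fix x :: "'n \<Rightarrow> 'k"
  define y where "y i = (if i \<in> J then x i else 0)" for i
  define z where "z i = (if i \<in> J then 0 else x i)" for i
  show "\<exists>!p. fst p \<in> coord_subspace J \<and> snd p \<in> coord_subspace (- J) \<and> x = vadd (fst p) (snd p)"
  proof (rule ex1I[of _ "(y, z)"])
    show "fst (y, z) \<in> coord_subspace J \<and> snd (y, z) \<in> coord_subspace (- J)
      \<and> x = vadd (fst (y, z)) (snd (y, z))"
      by (simp add: coord_subspace_def vadd_def y_def z_def fun_eq_iff)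
  next
    fix p
    assume p: "fst p \<in> coord_subspace J \<and> snd p \<in> coord_subspace (- J) \<and> x = vadd (fst p) (snd p)"
    have "fst p i = y i \<and> snd p i = z i" for i
      using p by (cases "i \<in> J") (simp_all add: coord_subspace_def vadd_def y_def z_def)
    then show "p = (y, z)" by (simp add: prod_eq_iff fun_eq_iff)
  qed
qed

lemma linear_map_coord_subspace:
  fixes f :: "('n::finite \<Rightarrow> 'k::idem_semifield) \<Rightarrow> ('n \<Rightarrow> 'k)"
  assumes "is_linear_map f" and "\<And>j. j \<in> J \<Longrightarrow> f (unit_vec j) \<in> coord_subspace J"
    and "x \<in> coord_subspace J"
  shows "f x \<in> coord_subspace J"
proof -
  have "f x i = 0" if "i \<notin> J" for i
  proof -
    have terms: "x j * f (unit_vec j) i = 0" for j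
      using assms(2)[of j] assms(3) that by (cases "j \<in> J") (simp_all add: coord_subspace_def)
    show ?thesis
      unfolding linear_map_apply[OF assms(1), of x i] by (rule sum.neutral) (use terms in blast)
  qed
  then show ?thesis by (simp add: coord_subspace_def)
qed

lemma rep_linear_map: "is_rep G \<rho> \<Longrightarrow> g \<in> carrier G \<Longrightarrow> is_linear_map (\<rho> g)"
  by (simp add: is_rep_def is_linear_map_def)

lemma rep_vscale: "is_rep G \<rho> \<Longrightarrow> g \<in> carrier G \<Longrightarrow> \<rho> g (vscale c x) = vscale c (\<rho> g x)"
  by (simp add: is_rep_def)

lemma rep_inv_cancel:
  assumes "group G" and "is_rep G \<rho>" and "g \<in> carrier G"
  shows "\<rho> (inv\<^bsub>G\<^esub> g) (\<rho> g x) = x" and "\<rho> g (\<rho> (inv\<^bsub>G\<^esub> g) x) = x"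
proof -
  have "inv\<^bsub>G\<^esub> g \<in> carrier G" using group.inv_closed[OF assms(1,3)] .
  then have "\<rho> (inv\<^bsub>G\<^esub> g) (\<rho> g x) = \<rho> (inv\<^bsub>G\<^esub> g \<otimes>\<^bsub>G\<^esub> g) x"
    and "\<rho> g (\<rho> (inv\<^bsub>G\<^esub> g) x) = \<rho> (g \<otimes>\<^bsub>G\<^esub> inv\<^bsub>G\<^esub> g) x"
    using assms(2,3) by (simp_all add: is_rep_def)
  then show "\<rho> (inv\<^bsub>G\<^esub> g) (\<rho> g x) = x" and "\<rho> g (\<rho> (inv\<^bsub>G\<^esub> g) x) = x"
    using assms(2) group.l_inv[OF assms(1,3)] group.r_inv[OF assms(1,3)]
    by (simp_all add: is_rep_def)
qed

lemma rep_unit_vec: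
  assumes "group G" and "is_rep G \<rho>" and "g \<in> carrier G"
  shows "\<exists>c k. c \<noteq> 0 \<and> \<rho> g (unit_vec j :: 'n::finite \<Rightarrow> 'k::idem_semifield) = vscale c (unit_vec k)"
proof -
  have "inv\<^bsub>G\<^esub> g \<in> carrier G" using group.inv_closed[OF assms(1,3)] .
  show ?thesis
    by (rule invertible_linear_map_unit_vec[OF rep_linear_map[OF assms(2,3)]
          rep_linear_map[OF assms(2) \<open>inv\<^bsub>G\<^esub> g \<in> carrier G\<close>]])
      (rule rep_inv_cancel[OF assms])+
qed

text \<open>Each \<open>\<rho> g\<close> sends \<open>e\<^sub>j\<close> to a multiple \<open>c e\<^sub>k\<close>. If \<open>j \<notin> J\<close> but \<open>k \<in> J\<close>, then
  \<open>e\<^sub>j = c \<rho> (inv g) e\<^sub>k\<close> would lie in the coordinate subspace on \<open>J\<close>.\<close>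

lemma G_stable_coord_subspace_Compl:
  fixes \<rho> :: "'g \<Rightarrow> ('n::finite \<Rightarrow> 'k::idem_semifield) \<Rightarrow> ('n \<Rightarrow> 'k)"
  assumes "group G" and "is_rep G \<rho>" and stable: "G_stable G \<rho> (coord_subspace J)"
  shows "G_stable G \<rho> (coord_subspace (- J))"
  unfolding G_stable_def
proof (intro ballI)
  fix g and x :: "'n \<Rightarrow> 'k" assume g: "g \<in> carrier G" and x: "x \<in> coord_subspace (- J)"
  show "\<rho> g x \<in> coord_subspace (- J)"
  proof (rule linear_map_coord_subspace[OF rep_linear_map[OF assms(2) g] _ x])
    fix j assume "j \<in> - J"
    obtain c k where gj: "\<rho> g (unit_vec j) = vscale c (unit_vec k)"
      using rep_unit_vec[OF assms(1,2) g] by blast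
    have "k \<notin> J"
    proof
      assume "k \<in> J"
      have "inv\<^bsub>G\<^esub> g \<in> carrier G" using group.inv_closed[OF assms(1) g] .
      moreover have "(unit_vec k :: 'n \<Rightarrow> 'k) \<in> coord_subspace J"
        using \<open>k \<in> J\<close> by (simp add: unit_vec_in_coord_subspace_iff)
      ultimately have "\<rho> (inv\<^bsub>G\<^esub> g) (unit_vec k) \<in> coord_subspace J"
        using stable unfolding G_stable_def by blast
      then have "vscale c (\<rho> (inv\<^bsub>G\<^esub> g) (unit_vec k)) \<in> coord_subspace J"
        by (rule vscale_in_coord_subspace)
      moreover have "vscale c (\<rho> (inv\<^bsub>G\<^esub> g) (unit_vec k)) = unit_vec j"
        using rep_inv_cancel(1)[OF assms(1,2) g, of "unit_vec j"] gj
          rep_vscale[OF assms(2) \<open>inv\<^bsub>G\<^esub> g \<in> carrier G\<close>] by simp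
      ultimately show False using \<open>j \<in> - J\<close> by (simp add: unit_vec_in_coord_subspace_iff)
    qed
    then show "\<rho> g (unit_vec j) \<in> coord_subspace (- J)"
      unfolding gj by (simp add: vscale_in_coord_subspace unit_vec_in_coord_subspace_iff)
  qed
qed

lemma indecomposable_G_stable_coord_subspace:
  fixes \<rho> :: "'g \<Rightarrow> ('n::finite \<Rightarrow> 'k::idem_semifield) \<Rightarrow> ('n \<Rightarrow> 'k)"
  assumes "group G" and "is_rep G \<rho>" and "indecomposable G \<rho>"
    and "G_stable G \<rho> (coord_subspace J)" and "i \<in> J"
  shows "J = UNIV"
proof (rule ccontr)
  assume "J \<noteq> UNIV"
  then obtain j where "j \<in> - J" by blast
  then have "coord_subspace (- J) \<noteq> {\<lambda>_. 0 :: 'k}"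
    by (rule coord_subspace_nontrivial)
  moreover have "coord_subspace J \<noteq> {\<lambda>_. 0 :: 'k}"
    using assms(5) by (rule coord_subspace_nontrivial)
  moreover have "G_stable G \<rho> (coord_subspace (- J))"
    using G_stable_coord_subspace_Compl[OF assms(1,2,4)] .
  moreover have "is_submodule (coord_subspace J :: ('n \<Rightarrow> 'k) set)"
    and "is_submodule (coord_subspace (- J) :: ('n \<Rightarrow> 'k) set)"
    by (rule is_submodule_coord_subspace)+
  moreover have "is_direct_sum (coord_subspace J) (coord_subspace (- J) :: ('n \<Rightarrow> 'k) set)"
    by (rule is_direct_sum_coord_subspace_Compl)
  ultimately show False
    using assms(3,4) unfolding indecomposable_def by blast
qed

lemma bij_betw_section_lcosets:
  assumes fibres: "\<And>g. g \<in> carrier G \<Longrightarrow> g <#\<^bsub>G\<^esub> H = {g' \<in> carrier G. \<pi> g' = \<pi> g}"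
    and transversal: "\<forall>C\<in>lcosets G H. s C \<in> C"
  shows "bij_betw \<pi> (s ` lcosets G H) (\<pi> ` carrier G)"
proof -
  have mem_coset: "g' \<in> C \<longleftrightarrow> g' \<in> carrier G \<and> \<pi> g' = \<pi> (s C)" if C: "C \<in> lcosets G H" for C g'
  proof -
    obtain a where "a \<in> carrier G" and "C = a <#\<^bsub>G\<^esub> H"
      using C unfolding lcosets_def by blast
    with fibres have C_eq: "C = {g' \<in> carrier G. \<pi> g' = \<pi> a}" by simp
    moreover have "s C \<in> C" using transversal C by blast
    ultimately have "\<pi> (s C) = \<pi> a" by blast
    with C_eq show ?thesis by simp
  qed
  have "inj_on \<pi> (s ` lcosets G H)"
  proof (rule inj_onI)
    fix x y assume "x \<in> s ` lcosets G H" "y \<in> s ` lcosets G H" and "\<pi> x = \<pi> y"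
    then obtain C1 C2 where C: "C1 \<in> lcosets G H" "C2 \<in> lcosets G H" "x = s C1" "y = s C2"
      by blast
    have "g' \<in> C1 \<longleftrightarrow> g' \<in> C2" for g'
      using mem_coset[OF C(1)] mem_coset[OF C(2)] \<open>\<pi> x = \<pi> y\<close> C(3,4) by simp
    then have "C1 = C2" by (simp add: set_eq_iff)
    with C(3,4) show "x = y" by simp
  qed
  moreover have "\<pi> ` s ` lcosets G H = \<pi> ` carrier G"
  proof
    show "\<pi> ` s ` lcosets G H \<subseteq> \<pi> ` carrier G"
      using mem_coset transversal by blast
    show "\<pi> ` carrier G \<subseteq> \<pi> ` s ` lcosets G H"
    proof
      fix i assume "i \<in> \<pi> ` carrier G"
      then obtain g where g: "g \<in> carrier G" "i = \<pi> g" by blast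
      then have C: "g <#\<^bsub>G\<^esub> H \<in> lcosets G H" by (simp add: lcosets_def)
      then have "s (g <#\<^bsub>G\<^esub> H) \<in> g <#\<^bsub>G\<^esub> H" using transversal by blast
      then have "\<pi> (s (g <#\<^bsub>G\<^esub> H)) = i" using fibres g by simp
      with C show "i \<in> \<pi> ` s ` lcosets G H" by blast
    qed
  qed
  ultimately show ?thesis by (simp add: bij_betw_def)
qed

locale monomial_orbit =
  fixes G :: "('g, 'm) monoid_scheme" (structure)
    and \<rho> :: "'g \<Rightarrow> ('n::finite \<Rightarrow> 'k::idem_semifield) \<Rightarrow> ('n \<Rightarrow> 'k)"
    and v :: "'n \<Rightarrow> 'k" and \<pi> :: "'g \<Rightarrow> 'n" and \<mu> :: "'g \<Rightarrow> 'k"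
  assumes group: "group G" and rep: "is_rep G \<rho>"
    and \<mu>_nonzero: "g \<in> carrier G \<Longrightarrow> \<mu> g \<noteq> 0"
    and rep_apply_v: "g \<in> carrier G \<Longrightarrow> \<rho> g v = vscale (\<mu> g) (unit_vec (\<pi> g))"
begin

sublocale group G by (rule group)

lemma rep_apply_v_coord: "g \<in> carrier G \<Longrightarrow> \<rho> g v i = (if i = \<pi> g then \<mu> g else 0)"
  by (simp add: rep_apply_v vscale_def unit_vec_def)

lemma rep_mult_unit_vec_coord:
  assumes "g \<in> carrier G" and "h \<in> carrier G"
  shows "\<mu> h * \<rho> g (unit_vec (\<pi> h)) i = (if i = \<pi> (g \<otimes> h) then \<mu> (g \<otimes> h) else 0)"
proof -
  have "\<rho> g (\<rho> h v) = vscale (\<mu> h) (\<rho> g (unit_vec (\<pi> h)))"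
    using assms by (simp add: rep_apply_v rep_vscale[OF rep])
  then have "\<mu> h * \<rho> g (unit_vec (\<pi> h)) i = \<rho> g (\<rho> h v) i" by (simp add: vscale_def)
  also have "\<dots> = \<rho> (g \<otimes> h) v i"
    using rep assms by (simp add: is_rep_def)
  finally show ?thesis using assms by (simp add: rep_apply_v_coord)
qed

lemma orbit_mult_cong:
  assumes "g \<in> carrier G" "h \<in> carrier G" "h' \<in> carrier G" and "\<pi> h = \<pi> h'"
  shows "\<pi> (g \<otimes> h) = \<pi> (g \<otimes> h')"
proof -
  let ?i = "\<pi> (g \<otimes> h)"
  have "\<mu> h * \<rho> g (unit_vec (\<pi> h)) ?i \<noteq> 0"
    using rep_mult_unit_vec_coord[OF assms(1,2)] \<mu>_nonzero assms(1,2) by simp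
  then have "\<rho> g (unit_vec (\<pi> h)) ?i \<noteq> 0" by simp
  then have "\<mu> h' * \<rho> g (unit_vec (\<pi> h')) ?i \<noteq> 0"
    using \<mu>_nonzero assms(3,4) by simp
  then show ?thesis
    using rep_mult_unit_vec_coord[OF assms(1,3)] by (simp split: if_splits)
qed

lemma G_stable_orbit: "G_stable G \<rho> (coord_subspace (\<pi> ` carrier G))"
  unfolding G_stable_def
proof (intro ballI)
  fix g and x :: "'n \<Rightarrow> 'k"
  assume g: "g \<in> carrier G" and x: "x \<in> coord_subspace (\<pi> ` carrier G)"
  show "\<rho> g x \<in> coord_subspace (\<pi> ` carrier G)"
  proof (rule linear_map_coord_subspace[OF rep_linear_map[OF rep g] _ x])
    fix j assume "j \<in> \<pi> ` carrier G"
    then obtain h where h: "h \<in> carrier G" "j = \<pi> h" by blast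
    have "\<mu> h * \<rho> g (unit_vec j) i = 0" if "i \<notin> \<pi> ` carrier G" for i
      using rep_mult_unit_vec_coord[OF g h(1), of i] h g that by auto
    then show "\<rho> g (unit_vec j) \<in> coord_subspace (\<pi> ` carrier G)"
      using \<mu>_nonzero[OF h(1)] by (simp add: coord_subspace_def)
  qed
qed

lemma orbit_eq_UNIV: "indecomposable G \<rho> \<Longrightarrow> \<pi> ` carrier G = UNIV"
  using indecomposable_G_stable_coord_subspace[OF group rep _ G_stable_orbit] by blast

definition line_stabilizer :: "'g set" where
  "line_stabilizer = {h \<in> carrier G. \<pi> h = \<pi> \<one>}"

lemma line_stabilizer_eq: "{g \<in> carrier G. kspan (\<rho> g v) = kspan v} = line_stabilizer"
proof -
  have "v = \<rho> \<one> v" using rep by (simp add: is_rep_def)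
  then have "kspan v = kspan (unit_vec (\<pi> \<one>))"
    by (simp add: rep_apply_v kspan_vscale \<mu>_nonzero)
  moreover have "kspan (\<rho> g v) = kspan (unit_vec (\<pi> g))" if "g \<in> carrier G" for g
    using that by (simp add: rep_apply_v kspan_vscale \<mu>_nonzero)
  ultimately show ?thesis by (auto simp: line_stabilizer_def kspan_unit_vec_eq_iff)
qed

lemma orbit_mult_line_stabilizer:
  assumes "g \<in> carrier G" and "h \<in> line_stabilizer"
  shows "\<pi> (g \<otimes> h) = \<pi> g"
proof -
  have "h \<in> carrier G" and "\<pi> h = \<pi> \<one>" using assms(2) by (simp_all add: line_stabilizer_def)
  from orbit_mult_cong[OF assms(1) this(1) one_closed this(2)] assms(1) show ?thesis by simp
qed

lemma l_coset_line_stabilizer: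
  assumes g: "g \<in> carrier G"
  shows "g <# line_stabilizer = {g' \<in> carrier G. \<pi> g' = \<pi> g}"
proof (intro equalityI subsetI)
  fix g' assume "g' \<in> g <# line_stabilizer"
  then obtain h where "h \<in> line_stabilizer" and "g' = g \<otimes> h"
    unfolding l_coset_def by blast
  with g show "g' \<in> {g' \<in> carrier G. \<pi> g' = \<pi> g}"
    by (simp add: orbit_mult_line_stabilizer line_stabilizer_def)
next
  fix g' assume "g' \<in> {g' \<in> carrier G. \<pi> g' = \<pi> g}"
  then have g': "g' \<in> carrier G" "\<pi> g' = \<pi> g" by simp_all
  define h where "h = inv g \<otimes> g'"
  have "\<pi> h = \<pi> (inv g \<otimes> g)"
    unfolding h_def using orbit_mult_cong[of "inv g" g' g] g g' by simp
  then have "h \<in> line_stabilizer" using g g' by (simp add: h_def line_stabilizer_def)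
  moreover have "g' = g \<otimes> h" using g g' by (simp add: h_def m_assoc[symmetric])
  ultimately show "g' \<in> g <# line_stabilizer" unfolding l_coset_def by blast
qed

lemma lincomb_rep_v_apply:
  assumes "T \<subseteq> carrier G" and "finite T"
  shows "lincomb a (\<lambda>g. \<rho> g v) T i = (\<Sum>g\<in>{g\<in>T. \<pi> g = i}. a g * \<mu> g)"
proof -
  have "lincomb a (\<lambda>g. \<rho> g v) T i = (\<Sum>g\<in>T. if \<pi> g = i then a g * \<mu> g else 0)"
    unfolding lincomb_def using assms(1) by (intro sum.cong) (auto simp: rep_apply_v_coord)
  also have "\<dots> = (\<Sum>g\<in>{g\<in>T. \<pi> g = i}. a g * \<mu> g)"
    by (rule sum.inter_filter[OF assms(2), symmetric])
  finally show ?thesis .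
qed

lemma unique_lincomb_transversal:
  assumes S: "S \<subseteq> carrier G" and bij: "bij_betw \<pi> S UNIV"
  shows "\<exists>!a. (\<forall>g. g \<notin> S \<longrightarrow> a g = 0) \<and> x = lincomb a (\<lambda>g. \<rho> g v) S"
proof -
  have "finite S" using bij_betw_finite[OF bij] by simp
  have coord: "lincomb a (\<lambda>g. \<rho> g v) S (\<pi> g0) = a g0 * \<mu> g0" if "g0 \<in> S" for a g0
  proof -
    have "{g \<in> S. \<pi> g = \<pi> g0} = {g0}"
      using that bij by (auto simp: bij_betw_def inj_on_eq_iff)
    then show ?thesis by (simp add: lincomb_rep_v_apply[OF S \<open>finite S\<close>])
  qed
  define a where "a g = (if g \<in> S then x (\<pi> g) * recip (\<mu> g) else 0)" for g
  show ?thesis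
  proof (rule ex1I[of _ a])
    show "(\<forall>g. g \<notin> S \<longrightarrow> a g = 0) \<and> x = lincomb a (\<lambda>g. \<rho> g v) S"
    proof (intro conjI allI impI ext)
      fix g assume "g \<notin> S" then show "a g = 0" by (simp add: a_def)
    next
      fix i
      obtain g0 where g0: "g0 \<in> S" "i = \<pi> g0"
        using bij by (metis UNIV_I bij_betw_def imageE)
      then have "\<mu> g0 \<noteq> 0" using S \<mu>_nonzero by blast
      with g0 show "x i = lincomb a (\<lambda>g. \<rho> g v) S i"
        by (simp add: coord a_def mult.assoc recip_mult)
    qed
  next
    fix b assume b: "(\<forall>g. g \<notin> S \<longrightarrow> b g = 0) \<and> x = lincomb b (\<lambda>g. \<rho> g v) S"
    show "b = a"
    proof
      fix g show "b g = a g"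
      proof (cases "g \<in> S")
        case True
        then have "\<mu> g \<noteq> 0" using S \<mu>_nonzero by blast
        moreover have "x (\<pi> g) = b g * \<mu> g" using b coord[OF True] by simp
        ultimately show ?thesis using True by (simp add: a_def mult.assoc mult_recip)
      qed (use b in \<open>simp add: a_def\<close>)
    qed
  qed
qed

lemma coset_constant_iff:
  assumes "g \<in> carrier G"
  shows "(\<forall>h\<in>line_stabilizer. a (g \<otimes> h) = a g) \<longleftrightarrow> (\<forall>g'\<in>carrier G. \<pi> g' = \<pi> g \<longrightarrow> a g' = a g)"
proof -
  have "(\<forall>h\<in>line_stabilizer. a (g \<otimes> h) = a g) \<longleftrightarrow> (\<forall>g'\<in>g <# line_stabilizer. a g' = a g)"
    by (auto simp: l_coset_def)
  then show ?thesis using l_coset_line_stabilizer[OF assms] by auto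
qed

definition fibre_weight :: "'n \<Rightarrow> 'k" where
  "fibre_weight i = (\<Sum>g\<in>{g \<in> carrier G. \<pi> g = i}. \<mu> g)"

lemma fibre_weight_nonzero:
  assumes "finite (carrier G)" and "g \<in> carrier G"
  shows "fibre_weight (\<pi> g) \<noteq> 0"
  using assms \<mu>_nonzero by (auto simp: fibre_weight_def idem_sum_eq_0_iff)

lemma lincomb_coset_constant_apply:
  assumes fin: "finite (carrier G)" and g: "g \<in> carrier G"
    and const: "\<forall>g\<in>carrier G. \<forall>h\<in>line_stabilizer. a (g \<otimes> h) = a g"
  shows "lincomb a (\<lambda>g. \<rho> g v) (carrier G) (\<pi> g) = a g * fibre_weight (\<pi> g)"
proof -
  have "\<forall>h\<in>line_stabilizer. a (g \<otimes> h) = a g" using const g by blast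
  then have fibre_const: "\<forall>g'\<in>carrier G. \<pi> g' = \<pi> g \<longrightarrow> a g' = a g"
    using coset_constant_iff[OF g] by blast
  have "lincomb a (\<lambda>g. \<rho> g v) (carrier G) (\<pi> g) = (\<Sum>g'\<in>{g' \<in> carrier G. \<pi> g' = \<pi> g}. a g' * \<mu> g')"
    by (rule lincomb_rep_v_apply[OF subset_refl fin])
  also have "\<dots> = (\<Sum>g'\<in>{g' \<in> carrier G. \<pi> g' = \<pi> g}. a g * \<mu> g')"
    by (rule sum.cong[OF refl]) (use fibre_const in auto)
  also have "\<dots> = a g * fibre_weight (\<pi> g)" by (simp add: fibre_weight_def sum_distrib_left)
  finally show ?thesis .
qed


lemma unique_lincomb_coset_constant:
  assumes fin: "finite (carrier G)" and onto: "\<pi> ` carrier G = UNIV"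
  shows "\<exists>!a. (\<forall>g. g \<notin> carrier G \<longrightarrow> a g = 0)
    \<and> (\<forall>g\<in>carrier G. \<forall>h\<in>line_stabilizer. a (g \<otimes> h) = a g)
    \<and> x = lincomb a (\<lambda>g. \<rho> g v) (carrier G)"
proof -
  define a where "a g = (if g \<in> carrier G then x (\<pi> g) * recip (fibre_weight (\<pi> g)) else 0)"
    for g
  have a_const: "\<forall>g\<in>carrier G. \<forall>h\<in>line_stabilizer. a (g \<otimes> h) = a g"
    by (simp add: orbit_mult_line_stabilizer a_def line_stabilizer_def)
  show ?thesis
  proof (rule ex1I[of _ a], intro conjI allI impI ext a_const)
    fix g assume "g \<notin> carrier G" then show "a g = 0" by (simp add: a_def)
  next
    fix i
    obtain g where g: "g \<in> carrier G" "i = \<pi> g" using onto by (metis UNIV_I imageE)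
    then show "x i = lincomb a (\<lambda>g. \<rho> g v) (carrier G) i"
      using fibre_weight_nonzero[OF fin g(1)]
      by (simp add: lincomb_coset_constant_apply[OF fin g(1) a_const] a_def mult.assoc recip_mult)
  next
    fix b
    assume b: "(\<forall>g. g \<notin> carrier G \<longrightarrow> b g = 0)
      \<and> (\<forall>g\<in>carrier G. \<forall>h\<in>line_stabilizer. b (g \<otimes> h) = b g)
      \<and> x = lincomb b (\<lambda>g. \<rho> g v) (carrier G)"
    show "b = a"
    proof
      fix g show "b g = a g"
      proof (cases "g \<in> carrier G")
        case True
        with b have "x (\<pi> g) = b g * fibre_weight (\<pi> g)"
          using lincomb_coset_constant_apply[OF fin True, of b] by simp
        with True show ?thesis
          using fibre_weight_nonzero[OF fin True] by (simp add: a_def mult.assoc mult_recip)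
      qed (use b in \<open>simp add: a_def\<close>)
    qed
  qed
qed

end

lemma exists_monomial_orbit:
  fixes \<rho> :: "'g \<Rightarrow> ('n::finite \<Rightarrow> 'k::idem_semifield) \<Rightarrow> ('n \<Rightarrow> 'k)"
  assumes "group G" and "is_rep G \<rho>" and "is_basis B" and "v \<in> B"
  shows "\<exists>\<pi> \<mu>. monomial_orbit G \<rho> v \<pi> \<mu>"
proof -
  obtain c i where "c \<noteq> 0" and v: "v = vscale c (unit_vec i)"
    using basis_vec_eq_vscale_unit_vec[OF assms(3,4)] by blast
  have "\<forall>g\<in>carrier G. \<exists>k d. d \<noteq> 0 \<and> \<rho> g v = vscale d (unit_vec k)"
  proof
    fix g assume g: "g \<in> carrier G"
    obtain d k where "d \<noteq> 0" and "\<rho> g (unit_vec i) = vscale d (unit_vec k)"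
      using rep_unit_vec[OF assms(1,2) g] by blast
    then have "\<rho> g v = vscale (c * d) (unit_vec k)"
      by (simp add: v rep_vscale[OF assms(2) g] vscale_vscale)
    moreover have "c * d \<noteq> 0" using \<open>c \<noteq> 0\<close> \<open>d \<noteq> 0\<close> by simp
    ultimately show "\<exists>k d. d \<noteq> 0 \<and> \<rho> g v = vscale d (unit_vec k)" by blast
  qed
  then obtain \<pi> where "\<forall>g\<in>carrier G. \<exists>d. d \<noteq> 0 \<and> \<rho> g v = vscale d (unit_vec (\<pi> g))"
    by (rule bchoice[elim_format]) blast
  then obtain \<mu> where "\<forall>g\<in>carrier G. \<mu> g \<noteq> 0 \<and> \<rho> g v = vscale (\<mu> g) (unit_vec (\<pi> g))"
    by (rule bchoice[elim_format]) blast
  with assms(1,2) have "monomial_orbit G \<rho> v \<pi> \<mu>"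
    by (intro monomial_orbit.intro) auto
  then show ?thesis by blast
qed

lemma (in group) section_lcosets_subset:
  assumes "H \<subseteq> carrier G" and "\<forall>C\<in>lcosets G H. s C \<in> C"
  shows "s ` lcosets G H \<subseteq> carrier G"
  using assms l_coset_subset_G unfolding lcosets_def by blast

theorem lemma3p16:
  fixes G :: "('g, 'm) monoid_scheme"
    and \<rho> :: "'g \<Rightarrow> ('n::finite \<Rightarrow> 'k::idem_semifield) \<Rightarrow> ('n \<Rightarrow> 'k)"
    and B :: "('n \<Rightarrow> 'k) set" and v0 :: "'n \<Rightarrow> 'k"
    and H :: "'g set" and s :: "'g set \<Rightarrow> 'g"
  assumes "group G" and "finite (carrier G)"
    and "is_rep G \<rho>" and "indecomposable G \<rho>"
    and "is_basis B" and "v0 \<in> B"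
    and "H = {g \<in> carrier G. kspan (\<rho> g v0) = kspan v0}"
    and "\<forall>C\<in>lcosets G H. s C \<in> C"
  shows "\<exists>v. (\<forall>x. \<exists>!a. (\<forall>g. g \<notin> s ` lcosets G H \<longrightarrow> a g = 0) \<and>
                      x = lincomb a (\<lambda>g. \<rho> g v) (s ` lcosets G H))
          \<and> (\<forall>x. \<exists>!a. (\<forall>g. g \<notin> carrier G \<longrightarrow> a g = 0) \<and>
                      (\<forall>g\<in>carrier G. \<forall>h\<in>H. a (g \<otimes>\<^bsub>G\<^esub> h) = a g) \<and>
                      x = lincomb a (\<lambda>g. \<rho> g v) (carrier G))"
proof -
  obtain \<pi> \<mu> where "monomial_orbit G \<rho> v0 \<pi> \<mu>"
    using exists_monomial_orbit[OF assms(1,3,5,6)] by blast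
  then interpret monomial_orbit G \<rho> v0 \<pi> \<mu> .
  have H: "H = line_stabilizer" using assms(7) line_stabilizer_eq by simp
  have onto: "\<pi> ` carrier G = UNIV" using orbit_eq_UNIV[OF assms(4)] .
  have S: "s ` lcosets G H \<subseteq> carrier G"
    using section_lcosets_subset[OF _ assms(8)] assms(7) by blast
  have "bij_betw \<pi> (s ` lcosets G line_stabilizer) (\<pi> ` carrier G)"
    using bij_betw_section_lcosets[OF l_coset_line_stabilizer] assms(8) unfolding H by blast
  then have bij: "bij_betw \<pi> (s ` lcosets G H) UNIV" unfolding H onto .
  show ?thesis
    by (intro exI[of _ v0] conjI allI unique_lincomb_transversal[OF S bij]
        unique_lincomb_coset_constant[OF assms(2) onto, folded H])
qed

end
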